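(* Let $w\in W$ and $\beta_1,\dots,\beta_m\in\Phi^+$ with $\ell(s_{\beta_i}s_{\beta_{i-1}}\cdots s_{\beta_1}w)=\ell(w)-i$ for all $i=1,\dots,m$. Assume $(\beta_i,\beta_j)\ne0$ for some $i\ne j$ in $\{1,\dots,m\}$. Then there exist $\gamma_1,\dots,\gamma_m\in\Phi^+$ such that $\ell(s_{\gamma_i}\cdots s_{\gamma_1}w)=\ell(w)-i$ for all $i=1,\dots,m$, $s_{\gamma_m}\cdots s_{\gamma_1}w=s_{\beta_m}\cdots s_{\beta_1}w$, and $(\gamma_1,\gamma_2)\ne0$.
   Context: $\Phi$ is the (finite, crystallographic) root system of a complex semisimple Lie algebra, $\Phi^+$ its positive roots with respect to a fixed basis, $W$ the Weyl group with length function $\ell$, $(\cdot,\cdot)$ a $W$-invariant scalar product, and $s_\beta$ the reflection in $\beta$. *)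

theory Defs
  imports "HOL-Analysis.Analysis"
begin

definition refl :: "'a::euclidean_space \<Rightarrow> 'a \<Rightarrow> 'a" where
  "refl a x = x - ((2 * (x \<bullet> a)) / (a \<bullet> a)) *\<^sub>R a"

definition root_system :: "'a::euclidean_space set \<Rightarrow> bool" where
  "root_system \<Phi> \<longleftrightarrow> finite \<Phi> \<and> 0 \<notin> \<Phi> \<and> span \<Phi> = UNIV
     \<and> (\<forall>a\<in>\<Phi>. refl a ` \<Phi> \<subseteq> \<Phi>)
     \<and> (\<forall>a\<in>\<Phi>. \<forall>b\<in>\<Phi>. 2 * (a \<bullet> b) / (b \<bullet> b) \<in> \<int>)
     \<and> (\<forall>a\<in>\<Phi>. \<forall>c::real. c *\<^sub>R a \<in> \<Phi> \<longrightarrow> c = 1 \<or> c = -1)"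

definition is_base :: "'a::euclidean_space set \<Rightarrow> 'a set \<Rightarrow> bool" where
  "is_base \<Phi> \<Delta> \<longleftrightarrow> \<Delta> \<subseteq> \<Phi> \<and> independent \<Delta>
     \<and> (\<forall>b\<in>\<Phi>. \<exists>c. b = (\<Sum>a\<in>\<Delta>. c a *\<^sub>R a) \<and> (\<forall>a\<in>\<Delta>. c a \<in> \<int>)
            \<and> ((\<forall>a\<in>\<Delta>. c a \<ge> 0) \<or> (\<forall>a\<in>\<Delta>. c a \<le> 0)))"

definition pos_roots :: "'a::euclidean_space set \<Rightarrow> 'a set \<Rightarrow> 'a set" where
  "pos_roots \<Phi> \<Delta> = {b\<in>\<Phi>. \<exists>c. b = (\<Sum>a\<in>\<Delta>. c a *\<^sub>R a) \<and> (\<forall>a\<in>\<Delta>. c a \<ge> 0)}"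

inductive_set weyl_group :: "'a::euclidean_space set \<Rightarrow> ('a \<Rightarrow> 'a) set" for \<Phi> where
  weyl_id: "id \<in> weyl_group \<Phi>"
| weyl_step: "w \<in> weyl_group \<Phi> \<Longrightarrow> a \<in> \<Phi> \<Longrightarrow> refl a \<circ> w \<in> weyl_group \<Phi>"

definition refl_word :: "'a::euclidean_space list \<Rightarrow> 'a \<Rightarrow> 'a" where
  "refl_word as = foldr (\<lambda>a f. refl a \<circ> f) as id"

definition weyl_length :: "'a::euclidean_space set \<Rightarrow> ('a \<Rightarrow> 'a) \<Rightarrow> nat" where
  "weyl_length \<Delta> w = (LEAST n. \<exists>as. length as = n \<and> set as \<subseteq> \<Delta> \<and> refl_word as = w)"

fun refl_prod :: "(nat \<Rightarrow> 'a::euclidean_space) \<Rightarrow> nat \<Rightarrow> 'a \<Rightarrow> 'a" where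
  "refl_prod b 0 = id"
| "refl_prod b (Suc i) = refl (b (Suc i)) \<circ> refl_prod b i"

end

theory Submission
  imports Defs
begin

text \<open>
  Orthogonal neighbours can be swapped, which
  moves a root orthogonal to all its predecessors to the front.  The essential step is
  the case of three descents a, b, c with a \<bullet> b = 0 and b \<bullet> c \<noteq> 0: writing
  s_c s_b s_a = s_(s_c a) s_c s_b = s_a s_(s_a c) s_b (or the same with a and b
  interchanged), a rank-two argument based on the descent criterion
  "s_\<beta> shortens u iff u\<inverse> \<beta> < 0" and on the crystallographic condition shows that one
  of these rewritings is again a chain of descents, now starting with two
  non-orthogonal roots.
\<close>

section \<open>Reflections and words of reflections\<close>

lemma refl_add: "refl a (x + y) = refl a x + refl a y"
  by (simp add: refl_def inner_add_left add_divide_distrib algebra_simps)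

lemma refl_scale: "refl a (c *\<^sub>R x) = c *\<^sub>R refl a x"
  by (simp add: refl_def algebra_simps)

lemma refl_linear: "linear (refl a)"
  by (rule linearI) (simp_all add: refl_add refl_scale)

lemma refl_minus: "refl a (- x) = - refl a x"
  using refl_scale[of a "-1" x] by simp

lemma refl_inner: "a \<noteq> 0 \<Longrightarrow> refl a x \<bullet> refl a y = x \<bullet> y"
  by (simp add: refl_def inner_diff_left inner_diff_right inner_commute field_simps)

lemma refl_self: "a \<noteq> 0 \<Longrightarrow> refl a a = - a"
  by (simp add: refl_def algebra_simps scaleR_2)

lemma refl_orth: "x \<bullet> a = 0 \<Longrightarrow> refl a x = x"
  by (simp add: refl_def)

lemma refl_refl: "a \<noteq> 0 \<Longrightarrow> refl a (refl a x) = x"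
  by (simp add: refl_def inner_diff_left field_simps)

lemma refl_inv: "a \<noteq> 0 \<Longrightarrow> bij (refl a) \<and> inv (refl a) = refl a"
  using o_bij[of "refl a" "refl a"] inv_unique_comp[of "refl a" "refl a"]
  by (auto simp: fun_eq_iff refl_refl)

lemma refl_uminus: "refl (- a) = refl a"
  by (rule ext) (simp add: refl_def)

lemma refl_orth_comm: "a \<bullet> b = 0 \<Longrightarrow> refl a (refl b x) = refl b (refl a x)"
  by (simp add: refl_def inner_diff_left inner_commute algebra_simps)

lemma refl_conj:
  assumes "linear f" and "\<And>x y. f x \<bullet> f y = x \<bullet> y"
  shows "f (refl a x) = refl (f a) (f x)"
proof -
  have "f (refl a x) = f x - ((2 * (x \<bullet> a)) / (a \<bullet> a)) *\<^sub>R f a"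
    by (simp add: refl_def linear_diff[OF assms(1)] linear_scale[OF assms(1)])
  also have "\<dots> = refl (f a) (f x)" by (simp add: refl_def assms(2))
  finally show ?thesis .
qed

lemma refl_conj_refl:
  assumes "a \<noteq> 0" shows "refl (refl a b) = refl a \<circ> refl b \<circ> refl a"
proof
  fix y
  have "refl a (refl b (refl a y)) = refl (refl a b) (refl a (refl a y))"
    by (rule refl_conj) (simp_all add: refl_linear refl_inner assms)
  then show "refl (refl a b) y = (refl a \<circ> refl b \<circ> refl a) y"
    by (simp add: refl_refl assms)
qed

lemma refl_word_Nil [simp]: "refl_word [] = id"
  by (simp add: refl_word_def)

lemma refl_word_Cons [simp]: "refl_word (a # as) = refl a \<circ> refl_word as"
  by (simp add: refl_word_def)

lemma refl_word_append: "refl_word (as @ bs) = refl_word as \<circ> refl_word bs"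
  by (induction as) auto

lemma refl_word_linear: "linear (refl_word as)"
proof (induction as)
  case Nil then show ?case using linear_id by (simp add: id_def)
next
  case (Cons a as) then show ?case using linear_compose[OF Cons.IH refl_linear[of a]] by (simp add: o_def)
qed

lemma refl_word_rev_comp:
  assumes "0 \<notin> set as" shows "refl_word (rev as) \<circ> refl_word as = id"
  using assms
proof (induction as)
  case (Cons a as)
  have "refl_word (rev (a # as)) \<circ> refl_word (a # as)
      = refl_word (rev as) \<circ> (refl a \<circ> refl a) \<circ> refl_word as"
    by (simp add: refl_word_append comp_assoc)
  also have "refl a \<circ> refl a = id"
    using Cons.prems by (auto simp: refl_refl)
  finally show ?case using Cons by simp
qed simp

lemma refl_word_bij_inv:
  assumes "0 \<notin> set as"
  shows "bij (refl_word as)" and "inv (refl_word as) = refl_word (rev as)"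
proof -
  have l: "refl_word (rev as) \<circ> refl_word as = id" and r: "refl_word as \<circ> refl_word (rev as) = id"
    using refl_word_rev_comp[of as] refl_word_rev_comp[of "rev as"] assms by simp_all
  show "bij (refl_word as)" using o_bij[OF l r] .
  show "inv (refl_word as) = refl_word (rev as)" using inv_unique_comp[OF r l] .
qed

section \<open>Positive and negative roots\<close>

locale root_base =
  fixes \<Phi> \<Delta> :: "'a::euclidean_space set"
  assumes root_system: "root_system \<Phi>" and base: "is_base \<Phi> \<Delta>"
begin

abbreviation Pos :: "'a set" where "Pos \<equiv> pos_roots \<Phi> \<Delta>"

lemma root_nz: "a \<in> \<Phi> \<Longrightarrow> a \<noteq> 0"
  using root_system by (auto simp: root_system_def)

lemma refl_closed: "a \<in> \<Phi> \<Longrightarrow> b \<in> \<Phi> \<Longrightarrow> refl a b \<in> \<Phi>"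
  using root_system by (auto simp: root_system_def)

lemma cartan_int: "a \<in> \<Phi> \<Longrightarrow> b \<in> \<Phi> \<Longrightarrow> 2 * (a \<bullet> b) / (b \<bullet> b) \<in> \<int>"
  using root_system by (simp add: root_system_def)

lemma reduced: "a \<in> \<Phi> \<Longrightarrow> c *\<^sub>R a \<in> \<Phi> \<Longrightarrow> c = 1 \<or> c = -1"
  using root_system by (simp add: root_system_def)

lemma simple_root: "\<alpha> \<in> \<Delta> \<Longrightarrow> \<alpha> \<in> \<Phi>"
  using base by (auto simp: is_base_def)

lemma finite_base: "finite \<Delta>"
  using base root_system finite_subset by (auto simp: is_base_def root_system_def)

lemma base_rep: "b \<in> \<Phi> \<Longrightarrow> \<exists>c. b = (\<Sum>a\<in>\<Delta>. c a *\<^sub>R a) \<and> (\<forall>a\<in>\<Delta>. c a \<in> \<int>)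
            \<and> ((\<forall>a\<in>\<Delta>. c a \<ge> 0) \<or> (\<forall>a\<in>\<Delta>. c a \<le> 0))"
  using base by (simp add: is_base_def)

lemma neg_closed: "a \<in> \<Phi> \<Longrightarrow> - a \<in> \<Phi>"
  using refl_closed[of a a] refl_self[of a] root_nz by auto

lemma coeff_unique:
  assumes "(\<Sum>a\<in>\<Delta>. c a *\<^sub>R a) = (\<Sum>a\<in>\<Delta>. d a *\<^sub>R a)" and "x \<in> \<Delta>"
  shows "c x = d x"
proof -
  have "(\<Sum>a\<in>\<Delta>. (c a - d a) *\<^sub>R a) = 0"
    using assms(1) by (simp add: scaleR_diff_left sum_subtractf)
  moreover have indep: "\<forall>f. (\<Sum>v\<in>\<Delta>. f v *\<^sub>R v) = 0 \<longrightarrow> (\<forall>v\<in>\<Delta>. f v = 0)"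
    using base by (simp add: is_base_def independent_explicit)
  ultimately have "\<forall>a\<in>\<Delta>. c a - d a = 0"
    using indep[rule_format, of "\<lambda>a. c a - d a"] by blast
  then show ?thesis using assms(2) by auto
qed

definition nonneg_comb :: "'a \<Rightarrow> bool" where
  "nonneg_comb v \<longleftrightarrow> (\<exists>c. v = (\<Sum>a\<in>\<Delta>. c a *\<^sub>R a) \<and> (\<forall>a\<in>\<Delta>. c a \<ge> 0))"

lemma Pos_iff: "v \<in> Pos \<longleftrightarrow> v \<in> \<Phi> \<and> nonneg_comb v"
  by (simp add: pos_roots_def nonneg_comb_def)

lemma Pos_root: "v \<in> Pos \<Longrightarrow> v \<in> \<Phi>"
  by (simp add: Pos_iff)

lemma nonneg_comb_add_scale:
  assumes "nonneg_comb x" "nonneg_comb y" "k \<ge> 0"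
  shows "nonneg_comb (x + k *\<^sub>R y)"
proof -
  obtain c d where c: "x = (\<Sum>a\<in>\<Delta>. c a *\<^sub>R a)" "\<forall>a\<in>\<Delta>. c a \<ge> 0"
    and d: "y = (\<Sum>a\<in>\<Delta>. d a *\<^sub>R a)" "\<forall>a\<in>\<Delta>. d a \<ge> 0"
    using assms(1,2) by (auto simp: nonneg_comb_def)
  have "x + k *\<^sub>R y = (\<Sum>a\<in>\<Delta>. (c a + k * d a) *\<^sub>R a)"
    using c d by (simp add: scaleR_add_left sum.distrib scaleR_sum_right)
  then show ?thesis unfolding nonneg_comb_def using c d assms(3)
    by (intro exI[of _ "\<lambda>a. c a + k * d a"]) auto
qed

lemma nonneg_comb_pointed: "nonneg_comb x \<Longrightarrow> nonneg_comb (- x) \<Longrightarrow> x = 0"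
proof -
  assume "nonneg_comb x" "nonneg_comb (- x)"
  then obtain c d where c: "x = (\<Sum>a\<in>\<Delta>. c a *\<^sub>R a)" "\<forall>a\<in>\<Delta>. c a \<ge> 0"
    and d: "- x = (\<Sum>a\<in>\<Delta>. d a *\<^sub>R a)" "\<forall>a\<in>\<Delta>. d a \<ge> 0" by (auto simp: nonneg_comb_def)
  have "(\<Sum>a\<in>\<Delta>. (c a + d a) *\<^sub>R a) = x + - x"
    using c(1) d(1) by (simp add: scaleR_add_left sum.distrib)
  then have "(\<Sum>a\<in>\<Delta>. (c a + d a) *\<^sub>R a) = (\<Sum>a\<in>\<Delta>. 0 *\<^sub>R a)" by simp
  then have "\<forall>a\<in>\<Delta>. c a + d a = 0" using coeff_unique[of "\<lambda>a. c a + d a" "\<lambda>a. 0"] by simp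
  then have "\<forall>a\<in>\<Delta>. c a = 0" using c d by force
  then show "x = 0" using c by simp
qed

lemma pos_or_neg: "r \<in> \<Phi> \<Longrightarrow> r \<in> Pos \<or> - r \<in> Pos"
proof -
  assume r: "r \<in> \<Phi>"
  obtain c where c: "r = (\<Sum>a\<in>\<Delta>. c a *\<^sub>R a)"
    "(\<forall>a\<in>\<Delta>. c a \<ge> 0) \<or> (\<forall>a\<in>\<Delta>. c a \<le> 0)" using base_rep[OF r] by blast
  have "- r = (\<Sum>a\<in>\<Delta>. (- c a) *\<^sub>R a)" using c(1) by (simp add: sum_negf)
  then have "nonneg_comb r \<or> nonneg_comb (- r)"
    using c unfolding nonneg_comb_def by (metis neg_0_le_iff_le)
  then show ?thesis using r neg_closed by (auto simp: Pos_iff)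
qed

lemma not_pos_and_neg: "r \<in> Pos \<Longrightarrow> - r \<in> Pos \<Longrightarrow> False"
  using nonneg_comb_pointed root_nz by (auto simp: Pos_iff)

lemma pos_comb: "v \<in> \<Phi> \<Longrightarrow> v = x + k *\<^sub>R y \<Longrightarrow> x \<in> Pos \<Longrightarrow> y \<in> Pos \<Longrightarrow> k \<ge> 0 \<Longrightarrow> v \<in> Pos"
  by (auto simp: Pos_iff intro!: nonneg_comb_add_scale)

lemma pos_scale:
  assumes "v \<in> \<Phi>" "v = k *\<^sub>R y" "y \<in> Pos" "k > 0" shows "v \<in> Pos"
proof -
  have "nonneg_comb 0" unfolding nonneg_comb_def by (intro exI[of _ "\<lambda>_. 0"]) simp
  then show ?thesis using nonneg_comb_add_scale[of 0 y k] assms by (auto simp: Pos_iff)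
qed

lemma pos_rep_int:
  assumes "b \<in> Pos"
  obtains c where "b = (\<Sum>a\<in>\<Delta>. c a *\<^sub>R a)" "\<forall>a\<in>\<Delta>. c a \<in> \<int> \<and> c a \<ge> 0"
proof -
  obtain c where c: "b = (\<Sum>a\<in>\<Delta>. c a *\<^sub>R a)" "\<forall>a\<in>\<Delta>. c a \<in> \<int>"
    using base_rep Pos_root[OF assms] by blast
  obtain d where d: "b = (\<Sum>a\<in>\<Delta>. d a *\<^sub>R a)" "\<forall>a\<in>\<Delta>. d a \<ge> 0"
    using assms by (auto simp: Pos_iff nonneg_comb_def)
  have "\<forall>a\<in>\<Delta>. c a = d a" using c(1) d(1) coeff_unique by metis
  then show ?thesis using that c d by auto
qed

lemma refl_simple_rep:
  assumes al: "\<alpha> \<in> \<Delta>" and c: "\<beta> = (\<Sum>a\<in>\<Delta>. c a *\<^sub>R a)"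
  shows "refl \<alpha> \<beta> = (\<Sum>a\<in>\<Delta>. (c a - (if a = \<alpha> then 2 * (\<beta> \<bullet> \<alpha>) / (\<alpha> \<bullet> \<alpha>) else 0)) *\<^sub>R a)"
proof -
  define k where "k = 2 * (\<beta> \<bullet> \<alpha>) / (\<alpha> \<bullet> \<alpha>)"
  have "(\<Sum>a\<in>\<Delta>. (if a = \<alpha> then k else 0) *\<^sub>R a) = k *\<^sub>R \<alpha>"
    using finite_base al by (simp add: if_distrib[of "\<lambda>t. t *\<^sub>R _"] sum.delta cong: if_cong)
  then show ?thesis
    unfolding k_def[symmetric] scaleR_diff_left sum_subtractf c[symmetric]
    by (simp add: refl_def k_def)
qed

lemma simple_refl_pos:
  assumes al: "\<alpha> \<in> \<Delta>" and b: "\<beta> \<in> Pos" and ne: "\<beta> \<noteq> \<alpha>"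
  shows "refl \<alpha> \<beta> \<in> Pos"
proof -
  have alP: "\<alpha> \<in> \<Phi>" using al simple_root by auto
  have bP: "\<beta> \<in> \<Phi>" using b Pos_root by auto
  obtain c where c: "\<beta> = (\<Sum>a\<in>\<Delta>. c a *\<^sub>R a)" "\<forall>a\<in>\<Delta>. c a \<ge> 0"
    using b by (auto simp: Pos_iff nonneg_comb_def)
  have split: "(\<Sum>a\<in>\<Delta>. c a *\<^sub>R a) = c \<alpha> *\<^sub>R \<alpha> + (\<Sum>a\<in>\<Delta>-{\<alpha>}. c a *\<^sub>R a)"
    using al finite_base by (simp add: sum.remove)
  text \<open>Since \<beta> is not a multiple of \<alpha>, some other coordinate is positive; it is
    unchanged by s_\<alpha>, so s_\<alpha> \<beta> cannot be negative.\<close>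
  have "\<exists>\<gamma>\<in>\<Delta>. \<gamma> \<noteq> \<alpha> \<and> c \<gamma> > 0"
  proof (rule ccontr)
    assume "\<not> ?thesis"
    then have "\<forall>a\<in>\<Delta>-{\<alpha>}. c a = 0" using c(2) by force
    then have "\<beta> = c \<alpha> *\<^sub>R \<alpha>" using c(1) split by simp
    then have "c \<alpha> = 1" using reduced[OF alP] bP c(2) al by force
    then show False using \<open>\<beta> = c \<alpha> *\<^sub>R \<alpha>\<close> ne by simp
  qed
  then obtain \<gamma> where g: "\<gamma> \<in> \<Delta>" "\<gamma> \<noteq> \<alpha>" "c \<gamma> > 0" by blast
  show ?thesis
  proof (rule ccontr)
    assume "refl \<alpha> \<beta> \<notin> Pos"
    then have "- refl \<alpha> \<beta> \<in> Pos" using pos_or_neg refl_closed[OF alP bP] by blast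
    then obtain d where d: "- refl \<alpha> \<beta> = (\<Sum>a\<in>\<Delta>. d a *\<^sub>R a)" "\<forall>a\<in>\<Delta>. d a \<ge> 0"
      by (auto simp: Pos_iff nonneg_comb_def)
    have "refl \<alpha> \<beta> = - (\<Sum>a\<in>\<Delta>. d a *\<^sub>R a)" using d(1) by (metis minus_minus)
    also have "\<dots> = (\<Sum>a\<in>\<Delta>. (- d a) *\<^sub>R a)" by (simp add: sum_negf)
    finally have "(\<Sum>a\<in>\<Delta>. (c a - (if a = \<alpha> then 2 * (\<beta> \<bullet> \<alpha>) / (\<alpha> \<bullet> \<alpha>) else 0)) *\<^sub>R a)
        = (\<Sum>a\<in>\<Delta>. (- d a) *\<^sub>R a)"
      using refl_simple_rep[OF al c(1)] by simp
    then have "c \<gamma> - (if \<gamma> = \<alpha> then 2 * (\<beta> \<bullet> \<alpha>) / (\<alpha> \<bullet> \<alpha>) else 0) = - d \<gamma>"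
      by (rule coeff_unique[OF _ g(1)])
    then show False using g d(2) by auto
  qed
qed

end

section \<open>The Weyl group as words in simple reflections\<close>

context root_base
begin

definition W :: "('a \<Rightarrow> 'a) set" where
  "W = {refl_word as | as. set as \<subseteq> \<Delta>}"

abbreviation len :: "('a \<Rightarrow> 'a) \<Rightarrow> nat" where
  "len \<equiv> weyl_length \<Delta>"

lemma simple_word_nz: "set as \<subseteq> \<Delta> \<Longrightarrow> 0 \<notin> set as"
  using root_nz simple_root by auto

lemma W_id: "id \<in> W"
  unfolding W_def by (auto intro!: exI[of _ "[]"])

lemma W_simple: "\<alpha> \<in> \<Delta> \<Longrightarrow> refl \<alpha> \<in> W"
  unfolding W_def by (auto intro!: exI[of _ "[\<alpha>]"])

lemma W_comp: "u \<in> W \<Longrightarrow> v \<in> W \<Longrightarrow> u \<circ> v \<in> W"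
proof -
  assume "u \<in> W" "v \<in> W"
  then obtain as bs where "u = refl_word as" "set as \<subseteq> \<Delta>" "v = refl_word bs" "set bs \<subseteq> \<Delta>"
    by (auto simp: W_def)
  then show ?thesis unfolding W_def by (intro CollectI exI[of _ "as @ bs"]) (auto simp: refl_word_append)
qed

lemma W_bij: "u \<in> W \<Longrightarrow> bij u"
  unfolding W_def using refl_word_bij_inv(1) simple_word_nz by blast

lemma W_inv: "u \<in> W \<Longrightarrow> inv u \<in> W"
proof -
  assume "u \<in> W"
  then obtain as where "u = refl_word as" "set as \<subseteq> \<Delta>" by (auto simp: W_def)
  then show ?thesis unfolding W_def using refl_word_bij_inv(2) simple_word_nz
    by (intro CollectI exI[of _ "rev as"]) auto
qed

lemma W_linear: "u \<in> W \<Longrightarrow> linear u"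
  unfolding W_def using refl_word_linear by blast

lemma W_root: "u \<in> W \<Longrightarrow> r \<in> \<Phi> \<Longrightarrow> u r \<in> \<Phi>"
proof -
  have "set as \<subseteq> \<Delta> \<Longrightarrow> r \<in> \<Phi> \<Longrightarrow> refl_word as r \<in> \<Phi>" for as r
    by (induction as arbitrary: r) (auto intro: refl_closed simple_root)
  then show "u \<in> W \<Longrightarrow> r \<in> \<Phi> \<Longrightarrow> u r \<in> \<Phi>" unfolding W_def by blast
qed

text \<open>Every positive root pairs positively with some simple root, because
  \<beta> \<bullet> \<beta> > 0 is a nonnegative combination of the products \<beta> \<bullet> \<alpha>.\<close>
lemma pos_pairs_with_simple:
  assumes "\<beta> \<in> Pos" shows "\<exists>\<alpha>\<in>\<Delta>. \<beta> \<bullet> \<alpha> > 0"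
proof -
  obtain c where c: "\<beta> = (\<Sum>a\<in>\<Delta>. c a *\<^sub>R a)" "\<forall>a\<in>\<Delta>. c a \<ge> 0"
    using assms by (auto simp: Pos_iff nonneg_comb_def)
  have "0 < \<beta> \<bullet> \<beta>" using root_nz[OF Pos_root[OF assms]] by simp
  also have "\<beta> \<bullet> \<beta> = (\<Sum>a\<in>\<Delta>. c a * (\<beta> \<bullet> a))"
    by (subst (2) c(1)) (simp add: inner_sum_right)
  finally obtain \<alpha> where "\<alpha> \<in> \<Delta>" "c \<alpha> * (\<beta> \<bullet> \<alpha>) > 0"
    by (meson not_less sum_nonpos)
  then show ?thesis using c(2) by (auto simp: zero_less_mult_iff)
qed

text \<open>Height reduction: if \<beta> \<noteq> \<alpha> is positive and \<beta> \<bullet> \<alpha> > 0 for a simple root \<alpha>, then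
  s_\<alpha> \<beta> is a positive root whose (integral, nonnegative) coordinates sum to at least one
  less, since the \<alpha>-coordinate drops by the positive Cartan integer of \<beta> and \<alpha>.\<close>
lemma simple_refl_lowers_height:
  assumes al: "\<alpha> \<in> \<Delta>" and b: "\<beta> \<in> Pos" and ne: "\<beta> \<noteq> \<alpha>" and ab: "\<beta> \<bullet> \<alpha> > 0"
    and c: "\<beta> = (\<Sum>a\<in>\<Delta>. c a *\<^sub>R a)" "\<forall>a\<in>\<Delta>. c a \<in> \<int> \<and> c a \<ge> 0"
  obtains c' where "refl \<alpha> \<beta> = (\<Sum>a\<in>\<Delta>. c' a *\<^sub>R a)" "\<forall>a\<in>\<Delta>. c' a \<in> \<int> \<and> c' a \<ge> 0"
    "(\<Sum>a\<in>\<Delta>. c' a) \<le> (\<Sum>a\<in>\<Delta>. c a) - 1"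
proof -
  have alP: "\<alpha> \<in> \<Phi>" using al simple_root by auto
  define k where "k = 2 * (\<beta> \<bullet> \<alpha>) / (\<alpha> \<bullet> \<alpha>)"
  have kZ: "k \<in> \<int>" unfolding k_def using cartan_int[OF Pos_root[OF b] alP] .
  have "k > 0" unfolding k_def using ab root_nz[OF alP] by simp
  then have k1: "k \<ge> 1" using Ints_nonzero_abs_ge1[OF kZ] by auto
  define c' where "c' = (\<lambda>a. c a - (if a = \<alpha> then k else 0))"
  have rep: "refl \<alpha> \<beta> = (\<Sum>a\<in>\<Delta>. c' a *\<^sub>R a)"
    unfolding c'_def k_def using refl_simple_rep[OF al c(1)] .
  obtain d where d: "refl \<alpha> \<beta> = (\<Sum>a\<in>\<Delta>. d a *\<^sub>R a)" "\<forall>a\<in>\<Delta>. d a \<ge> 0"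
    using simple_refl_pos[OF al b ne] by (auto simp: Pos_iff nonneg_comb_def)
  have "\<forall>a\<in>\<Delta>. c' a = d a" using rep d(1) coeff_unique by metis
  moreover have "\<forall>a\<in>\<Delta>. c' a \<in> \<int>" using c(2) kZ by (auto simp: c'_def intro: Ints_diff)
  ultimately have "\<forall>a\<in>\<Delta>. c' a \<in> \<int> \<and> c' a \<ge> 0" using d(2) by simp
  moreover have "(\<Sum>a\<in>\<Delta>. c' a) = (\<Sum>a\<in>\<Delta>. c a) - k"
    using finite_base al by (simp add: c'_def sum_subtractf sum.delta)
  ultimately show ?thesis using that rep k1 by simp
qed

text \<open>Every reflection in a positive root lies in W, by induction on the height: with \<alpha> as
  above, s_\<beta> = s_\<alpha> s_(s_\<alpha> \<beta>) s_\<alpha> and s_\<alpha> \<beta> has smaller height.\<close>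
lemma refl_pos_in_W:
  assumes "\<beta> \<in> Pos" shows "refl \<beta> \<in> W"
proof -
  obtain c where "\<beta> = (\<Sum>a\<in>\<Delta>. c a *\<^sub>R a)" "\<forall>a\<in>\<Delta>. c a \<in> \<int> \<and> c a \<ge> 0"
    using pos_rep_int[OF assms] by blast
  moreover obtain n :: nat where "(\<Sum>a\<in>\<Delta>. c a) < real n"
    using reals_Archimedean2 by blast
  ultimately show ?thesis using assms
  proof (induction n arbitrary: \<beta> c)
    case 0
    have "(\<Sum>a\<in>\<Delta>. c a) \<ge> 0" using "0.prems"(2) by (simp add: sum_nonneg)
    then show ?case using "0.prems"(3) by simp
  next
    case (Suc n)
    note c = Suc.prems(1,2) and b = Suc.prems(4)
    obtain \<alpha> where al: "\<alpha> \<in> \<Delta>" and ab: "\<beta> \<bullet> \<alpha> > 0"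
      using pos_pairs_with_simple[OF b] by blast
    have an: "\<alpha> \<noteq> 0" using root_nz simple_root al by blast
    show ?case
    proof (cases "\<beta> = \<alpha>")
      case True
      then show ?thesis using W_simple al by simp
    next
      case False
      obtain c' where c': "refl \<alpha> \<beta> = (\<Sum>a\<in>\<Delta>. c' a *\<^sub>R a)" "\<forall>a\<in>\<Delta>. c' a \<in> \<int> \<and> c' a \<ge> 0"
        "(\<Sum>a\<in>\<Delta>. c' a) \<le> (\<Sum>a\<in>\<Delta>. c a) - 1"
        using simple_refl_lowers_height[OF al b False ab c] by blast
      then have "refl (refl \<alpha> \<beta>) \<in> W"
        using Suc.IH simple_refl_pos[OF al b False] Suc.prems(3) by force
      moreover have "refl \<beta> = refl \<alpha> \<circ> refl (refl \<alpha> \<beta>) \<circ> refl \<alpha>"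
        using refl_conj_refl[OF an] refl_refl[OF an] by metis
      ultimately show ?thesis using W_simple[OF al] W_comp by metis
    qed
  qed
qed

lemma refl_in_W: "\<beta> \<in> \<Phi> \<Longrightarrow> refl \<beta> \<in> W"
  using pos_or_neg refl_pos_in_W refl_uminus by metis

lemma weyl_group_W: "w \<in> weyl_group \<Phi> \<Longrightarrow> w \<in> W"
proof (induction rule: weyl_group.induct)
  case weyl_id then show ?case by (rule W_id)
next
  case (weyl_step w a) then show ?case using refl_in_W W_comp by blast
qed

lemma refl_comp_W: "\<beta> \<in> \<Phi> \<Longrightarrow> u \<in> W \<Longrightarrow> refl \<beta> \<circ> u \<in> W"
  using refl_in_W W_comp by blast

lemma inv_refl_comp: "u \<in> W \<Longrightarrow> r \<in> \<Phi> \<Longrightarrow> inv (refl r \<circ> u) = inv u \<circ> refl r"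
  using o_inv_distrib[OF refl_inv[THEN conjunct1] W_bij] refl_inv root_nz by metis

lemma len_le: "set as \<subseteq> \<Delta> \<Longrightarrow> len (refl_word as) \<le> length as"
  unfolding weyl_length_def by (rule Least_le) auto

lemma reduced_word: "u \<in> W \<Longrightarrow> \<exists>as. set as \<subseteq> \<Delta> \<and> length as = len u \<and> refl_word as = u"
proof -
  assume "u \<in> W"
  then obtain bs where "set bs \<subseteq> \<Delta>" "refl_word bs = u" by (auto simp: W_def)
  then have "\<exists>as. length as = len u \<and> set as \<subseteq> \<Delta> \<and> refl_word as = u"
    unfolding weyl_length_def
    by (intro LeastI_ex[where P = "\<lambda>n. \<exists>as. length as = n \<and> set as \<subseteq> \<Delta> \<and> refl_word as = u"]) blast
  then show ?thesis by blast
qed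

lemma len_simple_step: "\<alpha> \<in> \<Delta> \<Longrightarrow> u \<in> W \<Longrightarrow> len (refl \<alpha> \<circ> u) \<le> len u + 1"
  using reduced_word len_le[of "_ # _"] by fastforce

end

section \<open>Descents\<close>

context root_base
begin

definition descent :: "('a \<Rightarrow> 'a) \<Rightarrow> 'a \<Rightarrow> bool" where
  "descent u r \<longleftrightarrow> len (refl r \<circ> u) < len u"

text \<open>Induction on len u: write
  u = s_\<alpha> u' with a reduced word; for \<beta> = \<alpha> this is immediate, otherwise s_\<alpha> \<beta> is a
  positive descent of the shorter u' and s_\<beta> u = s_\<alpha> (s_(s_\<alpha> \<beta>) u').\<close>
lemma descent_if_neg:
  assumes "u \<in> W" and "\<beta> \<in> Pos" and "- inv u \<beta> \<in> Pos"
  shows "descent u \<beta>"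
  using assms
proof (induction "len u" arbitrary: u \<beta> rule: less_induct)
  case less
  note u = less.prems(1) and b = less.prems(2) and nb = less.prems(3)
  obtain as where as: "set as \<subseteq> \<Delta>" "length as = len u" "refl_word as = u"
    using reduced_word[OF u] by blast
  show ?case
  proof (cases as)
    case Nil
    then have "- \<beta> \<in> Pos" using as nb by auto
    then show ?thesis using not_pos_and_neg b by blast
  next
    case (Cons \<alpha> as')
    define u' where "u' = refl_word as'"
    have al: "\<alpha> \<in> \<Delta>" and alP: "\<alpha> \<in> \<Phi>" using as Cons simple_root by auto
    have an: "\<alpha> \<noteq> 0" using root_nz[OF alP] .
    have u'W: "u' \<in> W" unfolding W_def u'_def using as Cons by auto
    have uu: "u = refl \<alpha> \<circ> u'" using as Cons u'_def by simp
    have "len u' \<le> length as'" unfolding u'_def using len_le as Cons by auto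
    then have lu': "len u' + 1 = len u"
      using len_simple_step[OF al u'W] uu as Cons by simp
    show ?thesis
    proof (cases "\<beta> = \<alpha>")
      case True
      then have "refl \<beta> \<circ> u = u'" using uu refl_refl[OF an] by (simp add: fun_eq_iff)
      then show ?thesis using lu' by (simp add: descent_def)
    next
      case False
      define \<beta>' where "\<beta>' = refl \<alpha> \<beta>"
      have b'P: "\<beta>' \<in> Pos" unfolding \<beta>'_def using simple_refl_pos[OF al b False] .
      have "inv u' \<beta>' = inv u \<beta>" using inv_refl_comp[OF u'W alP] refl_inv[OF an] uu \<beta>'_def by simp
      then have "descent u' \<beta>'" using less.hyps[of u'] lu' u'W b'P nb by simp
      moreover have "refl \<beta> \<circ> u = refl \<alpha> \<circ> (refl \<beta>' \<circ> u')"
        using uu refl_conj_refl[OF an, of \<beta>'] refl_refl[OF an] unfolding \<beta>'_def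
        by (simp add: fun_eq_iff)
      moreover have "refl \<beta>' \<circ> u' \<in> W" using refl_comp_W Pos_root b'P u'W by blast
      ultimately show ?thesis
        using len_simple_step[OF al, of "refl \<beta>' \<circ> u'"] lu' by (simp add: descent_def)
    qed
  qed
qed

lemma descent_iff:
  assumes u: "u \<in> W" and b: "\<beta> \<in> Pos"
  shows "descent u \<beta> \<longleftrightarrow> - inv u \<beta> \<in> Pos"
proof
  assume d: "descent u \<beta>"
  show "- inv u \<beta> \<in> Pos"
  proof (rule ccontr)
    assume nb: "- inv u \<beta> \<notin> Pos"
    have bP: "\<beta> \<in> \<Phi>" and bn: "\<beta> \<noteq> 0" using b Pos_root root_nz by auto
    have "inv u \<beta> \<in> \<Phi>" using W_root[OF W_inv[OF u] bP] .
    then have ip: "inv u \<beta> \<in> Pos" using pos_or_neg nb by blast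
    define v where "v = refl \<beta> \<circ> u"
    have vW: "v \<in> W" unfolding v_def using refl_comp_W bP u by blast
    have "inv v \<beta> = inv u (- \<beta>)"
      unfolding v_def inv_refl_comp[OF u bP] by (simp add: refl_self[OF bn])
    then have "- inv v \<beta> \<in> Pos" using ip linear_neg[OF W_linear[OF W_inv[OF u]]] by simp
    then have "descent v \<beta>" using descent_if_neg vW b by blast
    moreover have "refl \<beta> \<circ> v = u" unfolding v_def using refl_refl[OF bn] by (simp add: fun_eq_iff)
    ultimately show False using d unfolding descent_def v_def by simp
  qed
qed (use descent_if_neg u b in blast)

lemma descent_swap:
  assumes x: "x \<in> W" and a: "a \<in> Pos" and b: "b \<in> Pos" and ab: "a \<bullet> b = 0"
    and d1: "descent x a" and d2: "descent (refl a \<circ> x) b"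
  shows "descent x b" "descent (refl b \<circ> x) a" "refl a \<circ> (refl b \<circ> x) = refl b \<circ> (refl a \<circ> x)"
proof -
  have aP: "a \<in> \<Phi>" and bP: "b \<in> \<Phi>" using a b Pos_root by auto
  have rab: "refl a b = b" and rba: "refl b a = a"
    using ab by (simp_all add: refl_orth inner_commute)
  have "- inv (refl a \<circ> x) b \<in> Pos" using descent_iff[OF refl_comp_W[OF aP x] b] d2 by simp
  then show "descent x b" using descent_iff[OF x b] inv_refl_comp[OF x aP] rab by simp
  have "- inv x a \<in> Pos" using descent_iff[OF x a] d1 by simp
  then show "descent (refl b \<circ> x) a"
    using descent_iff[OF refl_comp_W[OF bP x] a] inv_refl_comp[OF x bP] rba by simp
  show "refl a \<circ> (refl b \<circ> x) = refl b \<circ> (refl a \<circ> x)"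
    using refl_orth_comm[OF ab] by (auto simp: fun_eq_iff)
qed

end

section \<open>Rank-two geometry\<close>

lemma Ints_prod_ge2:
  fixes k k' :: real
  assumes "k \<in> \<int>" "k' \<in> \<int>" "k * k' > 0" "\<not> (\<bar>k\<bar> = 1 \<and> \<bar>k'\<bar> = 1)"
  shows "k * k' \<ge> 2"
proof -
  have i1: "\<bar>k\<bar> \<in> \<int>" and i2: "\<bar>k'\<bar> \<in> \<int>" using assms(1,2) by (simp_all add: Ints_abs)
  have "k \<noteq> 0" "k' \<noteq> 0" using assms(3) by auto
  then have a1: "\<bar>k\<bar> \<ge> 1" and a2: "\<bar>k'\<bar> \<ge> 1"
    using Ints_nonzero_abs_ge1 assms(1,2) by blast+
  have ge2: "x \<ge> 2" if "x \<in> \<int>" "x > 1" for x :: real using that by (elim Ints_cases) simp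
  have "\<bar>k\<bar> * \<bar>k'\<bar> \<ge> 2"
  proof (cases "\<bar>k\<bar> = 1")
    case True
    then show ?thesis using assms(4) a2 ge2[OF i2] by auto
  next
    case False
    then have "\<bar>k\<bar> \<ge> 2" using ge2[OF i1] a1 by auto
    then show ?thesis using a2 mult_mono[of 2 "\<bar>k\<bar>" 1 "\<bar>k'\<bar>"] by simp
  qed
  then show ?thesis using assms(3) by (simp add: abs_mult[symmetric])
qed

text \<open>Bessel's inequality for an orthogonal pair a, b, in the case of equality: if the
  projections of c onto a and onto b each carry at least half of the squared length of c,
  then c lies in the plane of a and b and each carries exactly half.\<close>
lemma orthogonal_pair_halves:
  fixes a b c :: "'a::real_inner"
  assumes ab: "a \<bullet> b = 0" and A: "a \<bullet> a > 0" and B: "b \<bullet> b > 0"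
    and ia: "(a \<bullet> a) * (c \<bullet> c) \<le> 2 * (a \<bullet> c)^2" and ib: "(b \<bullet> b) * (c \<bullet> c) \<le> 2 * (b \<bullet> c)^2"
  shows "c = ((c \<bullet> a) / (a \<bullet> a)) *\<^sub>R a + ((c \<bullet> b) / (b \<bullet> b)) *\<^sub>R b"
    and "2 * (a \<bullet> c)^2 = (a \<bullet> a) * (c \<bullet> c)"
proof -
  define \<alpha> where "\<alpha> = (c \<bullet> a) / (a \<bullet> a)"
  define \<beta> where "\<beta> = (c \<bullet> b) / (b \<bullet> b)"
  define v where "v = c - \<alpha> *\<^sub>R a - \<beta> *\<^sub>R b"
  have "v \<bullet> v = c \<bullet> c - 2 * (\<alpha> * (c \<bullet> a) + \<beta> * (c \<bullet> b)) + \<alpha>^2 * (a \<bullet> a) + \<beta>^2 * (b \<bullet> b)"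
    unfolding v_def using ab
    by (simp add: inner_diff_left inner_diff_right inner_commute power2_eq_square algebra_simps)
  also have "\<dots> = c \<bullet> c - (c \<bullet> a)^2 / (a \<bullet> a) - (c \<bullet> b)^2 / (b \<bullet> b)"
    unfolding \<alpha>_def \<beta>_def using A B by (simp add: power2_eq_square field_simps)
  finally have vv: "v \<bullet> v = c \<bullet> c - (c \<bullet> a)^2 / (a \<bullet> a) - (c \<bullet> b)^2 / (b \<bullet> b)" .
  have ha: "(c \<bullet> a)^2 / (a \<bullet> a) \<ge> (c \<bullet> c) / 2" using ia A by (simp add: field_simps inner_commute)
  have hb: "(c \<bullet> b)^2 / (b \<bullet> b) \<ge> (c \<bullet> c) / 2" using ib B by (simp add: field_simps inner_commute)
  have "v \<bullet> v \<ge> 0" by simp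
  then have "v \<bullet> v = 0" and eq: "(c \<bullet> a)^2 / (a \<bullet> a) = (c \<bullet> c) / 2" using vv ha hb by linarith+
  then have "v = 0" by simp
  then show "c = \<alpha> *\<^sub>R a + \<beta> *\<^sub>R b" unfolding v_def by (simp add: algebra_simps)
  show "2 * (a \<bullet> c)^2 = (a \<bullet> a) * (c \<bullet> c)" using eq A by (simp add: field_simps inner_commute)
qed

text \<open>The reflections in the resulting plane configuration c = \<alpha> a + \<beta> b with a \<bullet> b = 0 and
  2 (a \<bullet> c)^2 = (a \<bullet> a) (c \<bullet> c) (a root system of type B2).\<close>
lemma orthogonal_pair_reflections:
  fixes a b c :: "'a::euclidean_space"
  assumes ab: "a \<bullet> b = 0" and A: "a \<bullet> a > 0" and B: "b \<bullet> b > 0"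
    and cab: "c = \<alpha> *\<^sub>R a + \<beta> *\<^sub>R b" and cc: "2 * (a \<bullet> c)^2 = (a \<bullet> a) * (c \<bullet> c)"
    and anz: "\<alpha> \<noteq> 0"
  shows "refl c a = (- (\<beta> / \<alpha>)) *\<^sub>R b" and "refl b c = - refl a c"
proof -
  have ac: "a \<bullet> c = \<alpha> * (a \<bullet> a)" and bc: "b \<bullet> c = \<beta> * (b \<bullet> b)"
    unfolding cab using ab by (simp_all add: inner_add_right inner_commute)
  have "c \<bullet> c = 2 * \<alpha>^2 * (a \<bullet> a)" using cc A unfolding ac by (simp add: power2_eq_square field_simps)
  then have "2 * (a \<bullet> c) / (c \<bullet> c) = 1 / \<alpha>"
    using ac anz A by (simp add: power2_eq_square field_simps)
  then have "refl c a = a - (1 / \<alpha>) *\<^sub>R c" by (simp add: refl_def)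
  then show "refl c a = (- (\<beta> / \<alpha>)) *\<^sub>R b" using anz by (simp add: cab algebra_simps)
  have "refl a c = c - (2 * \<alpha>) *\<^sub>R a" and "refl b c = c - (2 * \<beta>) *\<^sub>R b"
    using ac bc A B by (simp_all add: refl_def inner_commute)
  then have "refl a c = (- \<alpha>) *\<^sub>R a + \<beta> *\<^sub>R b" and "refl b c = \<alpha> *\<^sub>R a + (- \<beta>) *\<^sub>R b"
    unfolding cab by (simp_all add: algebra_simps scaleR_2 flip: scaleR_scaleR)
  then show "refl b c = - refl a c" by simp
qed

context root_base
begin

lemma cartan_product_bound:
  assumes e: "e \<in> \<Phi>" and c: "c \<in> \<Phi>" and ne: "e \<bullet> c \<noteq> 0"
    and not11: "\<not> (\<bar>2 * (c \<bullet> e) / (e \<bullet> e)\<bar> = 1 \<and> \<bar>2 * (e \<bullet> c) / (c \<bullet> c)\<bar> = 1)"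
  shows "(e \<bullet> e) * (c \<bullet> c) \<le> 2 * (e \<bullet> c)^2"
proof -
  define p where "p = 2 * (c \<bullet> e) / (e \<bullet> e)"
  define p' where "p' = 2 * (e \<bullet> c) / (c \<bullet> c)"
  have E: "e \<bullet> e > 0" and C: "c \<bullet> c > 0" using root_nz e c by auto
  have pp: "p * p' = 4 * (e \<bullet> c)^2 / ((e \<bullet> e) * (c \<bullet> c))"
    unfolding p_def p'_def by (simp add: inner_commute power2_eq_square)
  have "p * p' > 0" unfolding pp using E C ne by (simp add: divide_pos_pos)
  then have "p * p' \<ge> 2"
    using Ints_prod_ge2[of p p'] cartan_int[OF c e] cartan_int[OF e c] not11
    unfolding p_def p'_def by blast
  then show ?thesis unfolding pp using E C by (simp add: field_simps)
qed

end

section \<open>Exchanging a descent chain of length three\<close>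

context root_base
begin

text \<open>Let e, f, c be a descent chain of x with e \<bullet> f = 0 and Z = (s_f s_e x)\<inverse>.  Since
  s_c s_f s_e x = s_(s_c e) s_c s_f x = s_e s_(s_e c) s_f x, the chain can be rewritten to
  start with f, c, s_c e or with f, s_e c, e; the predicate below says that one of the two
  rewritings again consists of positive descents.\<close>
definition exchangeable :: "('a \<Rightarrow> 'a) \<Rightarrow> 'a \<Rightarrow> 'a \<Rightarrow> bool" where
  "exchangeable Z c e \<longleftrightarrow>
     (refl c e \<in> Pos \<and> - Z (refl e c) \<in> Pos) \<or> (refl e c \<in> Pos \<and> Z (refl c e) \<in> Pos)"

lemma not_exchangeable_acute:
  assumes Z: "Z \<in> W" and e: "e \<in> Pos" and c: "c \<in> Pos" and pos: "e \<bullet> c > 0"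
    and Ze: "Z e \<in> Pos" and Zc: "- Z c \<in> Pos" and nG: "\<not> exchangeable Z c e"
  shows "- refl c e \<in> Pos" "- refl e c \<in> Pos" "(e \<bullet> e) * (c \<bullet> c) \<le> 2 * (e \<bullet> c)^2"
proof -
  have eP: "e \<in> \<Phi>" and cP: "c \<in> \<Phi>" using e c Pos_root by auto
  define p where "p = 2 * (c \<bullet> e) / (e \<bullet> e)"
  define p' where "p' = 2 * (e \<bullet> c) / (c \<bullet> c)"
  have pp: "p > 0" "p' > 0" unfolding p_def p'_def using pos root_nz eP cP by (auto simp: inner_commute)
  have r1: "refl e c = c - p *\<^sub>R e" and r2: "refl c e = e - p' *\<^sub>R c"
    unfolding p_def p'_def by (simp_all add: refl_def)
  have lin: "linear Z" using W_linear[OF Z] .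
  have "Z (refl c e) = Z e + p' *\<^sub>R (- Z c)"
    unfolding r2 by (simp add: linear_diff[OF lin] linear_scale[OF lin])
  from pos_comb[OF W_root[OF Z refl_closed[OF cP eP]] this Ze Zc]
  have A: "Z (refl c e) \<in> Pos" using pp by simp
  have "- Z (refl e c) = - Z c + p *\<^sub>R Z e"
    unfolding r1 by (simp add: linear_diff[OF lin] linear_scale[OF lin])
  from pos_comb[OF neg_closed[OF W_root[OF Z refl_closed[OF eP cP]]] this Zc Ze]
  have B: "- Z (refl e c) \<in> Pos" using pp by simp
  have n1: "refl c e \<notin> Pos" and n2: "refl e c \<notin> Pos"
    using nG A B unfolding exchangeable_def by blast+
  show s1: "- refl c e \<in> Pos" using pos_or_neg[OF refl_closed[OF cP eP]] n1 by blast
  show s2: "- refl e c \<in> Pos" using pos_or_neg[OF refl_closed[OF eP cP]] n2 by blast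
  have "\<not> (\<bar>p\<bar> = 1 \<and> \<bar>p'\<bar> = 1)"
  proof
    assume "\<bar>p\<bar> = 1 \<and> \<bar>p'\<bar> = 1"
    then have "refl e c = - refl c e" using pp r1 r2 by simp
    then show False using s1 n2 by simp
  qed
  then show "(e \<bullet> e) * (c \<bullet> c) \<le> 2 * (e \<bullet> c)^2"
    using cartan_product_bound[OF eP cP] pos unfolding p_def p'_def by auto
qed

lemma not_exchangeable_obtuse:
  assumes Z: "Z \<in> W" and e: "e \<in> Pos" and c: "c \<in> Pos" and neg: "e \<bullet> c < 0"
    and nG: "\<not> exchangeable Z c e"
  shows "Z (refl e c) \<in> Pos" "- Z (refl c e) \<in> Pos" "(e \<bullet> e) * (c \<bullet> c) \<le> 2 * (e \<bullet> c)^2"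
proof -
  have eP: "e \<in> \<Phi>" and cP: "c \<in> \<Phi>" using e c Pos_root by auto
  have E: "e \<bullet> e > 0" and C: "c \<bullet> c > 0" using root_nz eP cP by auto
  define p where "p = 2 * (c \<bullet> e) / (e \<bullet> e)"
  define p' where "p' = 2 * (e \<bullet> c) / (c \<bullet> c)"
  have pp: "p < 0" "p' < 0" unfolding p_def p'_def using neg E C
    by (auto simp: inner_commute divide_neg_pos)
  have r1: "refl e c = c + (- p) *\<^sub>R e" and r2: "refl c e = e + (- p') *\<^sub>R c"
    unfolding p_def p'_def by (simp_all add: refl_def)
  have "refl e c \<in> Pos" using pos_comb[OF refl_closed[OF eP cP] r1 c e] pp by auto
  moreover have "refl c e \<in> Pos" using pos_comb[OF refl_closed[OF cP eP] r2 e c] pp by auto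
  ultimately have n1: "- Z (refl e c) \<notin> Pos" and n2: "Z (refl c e) \<notin> Pos"
    using nG unfolding exchangeable_def by blast+
  show s1: "Z (refl e c) \<in> Pos" using pos_or_neg[OF W_root[OF Z refl_closed[OF eP cP]]] n1 by blast
  show s2: "- Z (refl c e) \<in> Pos" using pos_or_neg[OF W_root[OF Z refl_closed[OF cP eP]]] n2 by blast
  have "\<not> (\<bar>p\<bar> = 1 \<and> \<bar>p'\<bar> = 1)"
  proof
    assume "\<bar>p\<bar> = 1 \<and> \<bar>p'\<bar> = 1"
    then have "refl e c = refl c e" using pp r1 r2 by (simp add: add.commute)
    then show False using s1 s2 not_pos_and_neg by simp
  qed
  then show "(e \<bullet> e) * (c \<bullet> c) \<le> 2 * (e \<bullet> c)^2"
    using cartan_product_bound[OF eP cP] neg unfolding p_def p'_def by auto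
qed

text \<open>If neither (c, a) nor (c, b) is exchangeable, both a and b make an angle of at most
  45 degrees with the line of c, so by Bessel's inequality c = \<alpha> a + \<beta> b lies in the plane
  of the orthogonal roots a and b, with the reflections computed above.\<close>
lemma non_exchangeable_plane:
  assumes Z: "Z \<in> W" and a: "a \<in> Pos" and b: "b \<in> Pos" and c: "c \<in> Pos"
    and ab: "a \<bullet> b = 0" and ac: "a \<bullet> c \<noteq> 0" and bc: "b \<bullet> c \<noteq> 0"
    and Za: "Z a \<in> Pos" and Zb: "Z b \<in> Pos" and Zc: "- Z c \<in> Pos"
    and nGa: "\<not> exchangeable Z c a" and nGb: "\<not> exchangeable Z c b"
  obtains \<alpha> \<beta> where "a \<bullet> c > 0 \<longleftrightarrow> \<alpha> > 0" "a \<bullet> c < 0 \<longleftrightarrow> \<alpha> < 0"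
    "b \<bullet> c > 0 \<longleftrightarrow> \<beta> > 0" "b \<bullet> c < 0 \<longleftrightarrow> \<beta> < 0" "\<alpha> \<noteq> 0" "\<beta> \<noteq> 0"
    "refl c a = (- (\<beta> / \<alpha>)) *\<^sub>R b" "refl b c = - refl a c"
proof -
  have A: "a \<bullet> a > 0" and B: "b \<bullet> b > 0" using root_nz Pos_root a b by auto
  have "(a \<bullet> a) * (c \<bullet> c) \<le> 2 * (a \<bullet> c)^2"
    using not_exchangeable_acute(3)[OF Z a c _ Za Zc nGa] not_exchangeable_obtuse(3)[OF Z a c _ nGa] ac
    by (cases "a \<bullet> c > 0") auto
  moreover have "(b \<bullet> b) * (c \<bullet> c) \<le> 2 * (b \<bullet> c)^2"
    using not_exchangeable_acute(3)[OF Z b c _ Zb Zc nGb] not_exchangeable_obtuse(3)[OF Z b c _ nGb] bc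
    by (cases "b \<bullet> c > 0") auto
  ultimately have cab: "c = ((c \<bullet> a) / (a \<bullet> a)) *\<^sub>R a + ((c \<bullet> b) / (b \<bullet> b)) *\<^sub>R b"
    and cc: "2 * (a \<bullet> c)^2 = (a \<bullet> a) * (c \<bullet> c)"
    using orthogonal_pair_halves[OF ab A B] by blast+
  define \<alpha> where "\<alpha> = (c \<bullet> a) / (a \<bullet> a)"
  define \<beta> where "\<beta> = (c \<bullet> b) / (b \<bullet> b)"
  have sa: "a \<bullet> c > 0 \<longleftrightarrow> \<alpha> > 0" "a \<bullet> c < 0 \<longleftrightarrow> \<alpha> < 0"
    and sb: "b \<bullet> c > 0 \<longleftrightarrow> \<beta> > 0" "b \<bullet> c < 0 \<longleftrightarrow> \<beta> < 0"
    unfolding \<alpha>_def \<beta>_def using A B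
    by (simp_all add: inner_commute divide_less_0_iff zero_less_divide_iff del: inner_gt_zero_iff)
  moreover have anz: "\<alpha> \<noteq> 0" and "\<beta> \<noteq> 0" using ac bc sa sb by auto
  moreover have "refl c a = (- (\<beta> / \<alpha>)) *\<^sub>R b" and "refl b c = - refl a c"
    using orthogonal_pair_reflections[OF ab A B _ cc anz] cab unfolding \<alpha>_def \<beta>_def by blast+
  ultimately show ?thesis using that by blast
qed

text \<open>Then (c, a) is exchangeable, or a \<bullet> c \<noteq> 0 and (c, b) is exchangeable:
  otherwise c lies in the plane of a and b, and each of the four sign patterns of its
  coordinates contradicts one of the sign conditions above.\<close>
lemma exchangeable_dichotomy:
  assumes Z: "Z \<in> W" and a: "a \<in> Pos" and b: "b \<in> Pos" and c: "c \<in> Pos"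
    and ab: "a \<bullet> b = 0" and bc: "b \<bullet> c \<noteq> 0"
    and Za: "Z a \<in> Pos" and Zb: "Z b \<in> Pos" and Zc: "- Z c \<in> Pos"
  shows "exchangeable Z c a \<or> (a \<bullet> c \<noteq> 0 \<and> exchangeable Z c b)"
proof (cases "a \<bullet> c = 0")
  case True
  then have "refl a c = c" "refl c a = a" by (simp_all add: refl_orth inner_commute)
  then show ?thesis using c Za unfolding exchangeable_def by simp
next
  case ac0: False
  show ?thesis
  proof (rule ccontr)
    assume "\<not> ?thesis"
    then have nGa: "\<not> exchangeable Z c a" and nGb: "\<not> exchangeable Z c b" using ac0 by auto
    obtain \<alpha> \<beta> where sa: "a \<bullet> c > 0 \<longleftrightarrow> \<alpha> > 0" "a \<bullet> c < 0 \<longleftrightarrow> \<alpha> < 0"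
      and sb: "b \<bullet> c > 0 \<longleftrightarrow> \<beta> > 0" "b \<bullet> c < 0 \<longleftrightarrow> \<beta> < 0" and anz: "\<alpha> \<noteq> 0" and bnz: "\<beta> \<noteq> 0"
      and rca: "refl c a = (- (\<beta> / \<alpha>)) *\<^sub>R b" and rbc: "refl b c = - refl a c"
      using non_exchangeable_plane[OF Z a b c ab ac0 bc Za Zb Zc nGa nGb] by blast
    have aP: "a \<in> \<Phi>" and cP: "c \<in> \<Phi>" using a c Pos_root by auto
    have lin: "linear Z" using W_linear[OF Z] .
    consider "\<alpha> > 0" "\<beta> > 0" | "\<alpha> > 0" "\<beta> < 0" | "\<alpha> < 0" "\<beta> > 0" | "\<alpha> < 0" "\<beta> < 0"
      using anz bnz by fastforce
    then show False
    proof cases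
      case 1
      then have "- refl a c \<in> Pos" and "- refl b c \<in> Pos"
        using not_exchangeable_acute(2)[OF Z a c _ Za Zc nGa]
          not_exchangeable_acute(2)[OF Z b c _ Zb Zc nGb] sa sb by simp_all
      then show False using rbc not_pos_and_neg by simp
    next
      case 2
      then have "- refl c a \<in> Pos" using not_exchangeable_acute(1)[OF Z a c _ Za Zc nGa] sa by simp
      moreover have "refl c a \<in> Pos"
        using pos_scale[OF refl_closed[OF cP aP] rca b] 2 by (simp add: divide_neg_pos)
      ultimately show False using not_pos_and_neg by blast
    next
      case 3
      then have "- Z (refl c a) \<in> Pos" using not_exchangeable_obtuse(2)[OF Z a c _ nGa] sa by simp
      moreover have "Z (refl c a) = (- (\<beta> / \<alpha>)) *\<^sub>R Z b" unfolding rca by (simp only: linear_scale[OF lin])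
      from pos_scale[OF W_root[OF Z refl_closed[OF cP aP]] this Zb]
      have "Z (refl c a) \<in> Pos" using 3 by (simp add: divide_pos_neg)
      ultimately show False using not_pos_and_neg by blast
    next
      case 4
      then have "Z (refl a c) \<in> Pos" and "Z (refl b c) \<in> Pos"
        using not_exchangeable_obtuse(1)[OF Z a c _ nGa] not_exchangeable_obtuse(1)[OF Z b c _ nGb] sa sb
        by simp_all
      moreover have "Z (refl b c) = - Z (refl a c)" unfolding rbc by (simp add: linear_neg[OF lin])
      ultimately show False using not_pos_and_neg by simp
    qed
  qed
qed


definition descent_triple :: "('a \<Rightarrow> 'a) \<Rightarrow> 'a \<Rightarrow> 'a \<Rightarrow> 'a \<Rightarrow> bool" where
  "descent_triple x r1 r2 r3 \<longleftrightarrow> r1 \<in> Pos \<and> r2 \<in> Pos \<and> r3 \<in> Pos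
     \<and> descent x r1 \<and> descent (refl r1 \<circ> x) r2 \<and> descent (refl r2 \<circ> (refl r1 \<circ> x)) r3"

lemma exchange_via_c:
  assumes x: "x \<in> W" and e: "e \<in> Pos" and f: "f \<in> Pos" and c: "c \<in> Pos" and ef: "e \<bullet> f = 0"
    and Xe: "- inv x e \<in> Pos" and Xf: "- inv x f \<in> Pos"
    and G: "refl c e \<in> Pos" "- (inv x \<circ> refl e \<circ> refl f) (refl e c) \<in> Pos"
  shows "descent_triple x f c (refl c e)"
    and "refl (refl c e) \<circ> (refl c \<circ> (refl f \<circ> x)) = refl c \<circ> (refl f \<circ> (refl e \<circ> x))"
proof -
  have eP: "e \<in> \<Phi>" and fP: "f \<in> \<Phi>" and cP: "c \<in> \<Phi>" using e f c Pos_root by auto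
  have en: "e \<noteq> 0" and cn: "c \<noteq> 0" using root_nz eP cP by auto
  have comm: "\<And>y. refl e (refl f y) = refl f (refl e y)" using refl_orth_comm[OF ef] .
  have x1: "refl f \<circ> x \<in> W" and x2: "refl c \<circ> (refl f \<circ> x) \<in> W" using refl_comp_W fP cP x by blast+
  have i1: "inv (refl f \<circ> x) = inv x \<circ> refl f" using inv_refl_comp[OF x fP] .
  have "descent x f" using descent_iff[OF x f] Xf by simp
  moreover have "descent (refl f \<circ> x) c"
    using descent_iff[OF x1 c] G(2) by (simp add: i1 comm refl_refl[OF en])
  moreover have "descent (refl c \<circ> (refl f \<circ> x)) (refl c e)"
  proof -
    have "inv (refl c \<circ> (refl f \<circ> x)) (refl c e) = inv x e"
      using ef by (simp add: inv_refl_comp[OF x1 cP] i1 refl_refl[OF cn] refl_orth)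
    then show ?thesis using descent_iff[OF x2 G(1)] Xe by simp
  qed
  ultimately show "descent_triple x f c (refl c e)" using f c G(1) by (simp add: descent_triple_def)
  show "refl (refl c e) \<circ> (refl c \<circ> (refl f \<circ> x)) = refl c \<circ> (refl f \<circ> (refl e \<circ> x))"
    using refl_conj_refl[OF cn, of e] by (simp add: fun_eq_iff refl_refl[OF cn] comm)
qed

lemma exchange_via_ec:
  assumes x: "x \<in> W" and e: "e \<in> Pos" and f: "f \<in> Pos" and c: "c \<in> Pos" and ef: "e \<bullet> f = 0"
    and Xf: "- inv x f \<in> Pos" and Zc: "- (inv x \<circ> refl e \<circ> refl f) c \<in> Pos"
    and G: "refl e c \<in> Pos" "(inv x \<circ> refl e \<circ> refl f) (refl c e) \<in> Pos"
  shows "descent_triple x f (refl e c) e"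
    and "refl e \<circ> (refl (refl e c) \<circ> (refl f \<circ> x)) = refl c \<circ> (refl f \<circ> (refl e \<circ> x))"
proof -
  have eP: "e \<in> \<Phi>" and fP: "f \<in> \<Phi>" and cP: "c \<in> \<Phi>" using e f c Pos_root by auto
  have en: "e \<noteq> 0" using root_nz eP by auto
  have rec: "refl e c \<in> \<Phi>" using refl_closed eP cP by blast
  have comm: "\<And>y. refl e (refl f y) = refl f (refl e y)" using refl_orth_comm[OF ef] .
  have x1: "refl f \<circ> x \<in> W" using refl_comp_W fP x by blast
  have x2: "refl (refl e c) \<circ> (refl f \<circ> x) \<in> W" using refl_comp_W[OF rec x1] .
  have i1: "inv (refl f \<circ> x) = inv x \<circ> refl f" using inv_refl_comp[OF x fP] .
  have "descent x f" using descent_iff[OF x f] Xf by simp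
  moreover have "descent (refl f \<circ> x) (refl e c)"
    using descent_iff[OF x1 G(1)] Zc by (simp add: i1 comm)
  moreover have "descent (refl (refl e c) \<circ> (refl f \<circ> x)) e"
  proof -
    have "inv (refl (refl e c) \<circ> (refl f \<circ> x)) = inv x \<circ> refl f \<circ> (refl e \<circ> refl c \<circ> refl e)"
      using inv_refl_comp[OF x1 rec] i1 refl_conj_refl[OF en, of c] by simp
    then have "inv (refl (refl e c) \<circ> (refl f \<circ> x)) e = inv x (refl f (refl e (refl c (- e))))"
      by (simp add: refl_self[OF en])
    also have "\<dots> = - (inv x \<circ> refl e \<circ> refl f) (refl c e)"
      by (simp add: refl_minus linear_neg[OF W_linear[OF W_inv[OF x]]] comm)
    finally show ?thesis using descent_iff[OF x2 e] G(2) by simp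
  qed
  ultimately show "descent_triple x f (refl e c) e" using f e G(1) by (simp add: descent_triple_def)
  show "refl e \<circ> (refl (refl e c) \<circ> (refl f \<circ> x)) = refl c \<circ> (refl f \<circ> (refl e \<circ> x))"
    using refl_conj_refl[OF en, of c] by (simp add: fun_eq_iff refl_refl[OF en] comm)
qed

lemma exchange_to_front:
  assumes x: "x \<in> W" and e: "e \<in> Pos" and f: "f \<in> Pos" and c: "c \<in> Pos"
    and ef: "e \<bullet> f = 0" and fc: "f \<bullet> c \<noteq> 0"
    and Xe: "- inv x e \<in> Pos" and Xf: "- inv x f \<in> Pos"
    and Zc: "- (inv x \<circ> refl e \<circ> refl f) c \<in> Pos"
    and G: "exchangeable (inv x \<circ> refl e \<circ> refl f) c e"
  shows "\<exists>r2 r3. f \<bullet> r2 \<noteq> 0 \<and> descent_triple x f r2 r3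
     \<and> refl r3 \<circ> (refl r2 \<circ> (refl f \<circ> x)) = refl c \<circ> (refl f \<circ> (refl e \<circ> x))"
  using G unfolding exchangeable_def
proof
  assume "refl c e \<in> Pos \<and> - (inv x \<circ> refl e \<circ> refl f) (refl e c) \<in> Pos"
  then show ?thesis using exchange_via_c[OF x e f c ef Xe Xf] fc by blast
next
  assume G2: "refl e c \<in> Pos \<and> (inv x \<circ> refl e \<circ> refl f) (refl c e) \<in> Pos"
  have "f \<bullet> refl e c = f \<bullet> c" using ef by (simp add: refl_def inner_diff_right inner_commute)
  then show ?thesis using exchange_via_ec[OF x e f c ef Xf Zc] G2 fc by (metis (no_types))
qed

text \<open>The roles
  of a and b are symmetric (they commute), and the dichotomy decides which one goes first.\<close>
lemma three_step_exchange:
  assumes x: "x \<in> W" and ab: "a \<bullet> b = 0" and bc: "b \<bullet> c \<noteq> 0"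
    and T: "descent_triple x a b c"
  shows "\<exists>r1 r2 r3. r1 \<bullet> r2 \<noteq> 0 \<and> descent_triple x r1 r2 r3
     \<and> refl r3 \<circ> (refl r2 \<circ> (refl r1 \<circ> x)) = refl c \<circ> (refl b \<circ> (refl a \<circ> x))"
proof -
  have a: "a \<in> Pos" and b: "b \<in> Pos" and c: "c \<in> Pos" using T by (simp_all add: descent_triple_def)
  have aP: "a \<in> \<Phi>" and bP: "b \<in> \<Phi>" using a b Pos_root by auto
  have an: "a \<noteq> 0" and bn: "b \<noteq> 0" using root_nz aP bP by auto
  have comm: "\<And>y. refl a (refl b y) = refl b (refl a y)" using refl_orth_comm[OF ab] .
  have rab: "refl a b = b" and rba: "refl b a = a" using ab by (simp_all add: refl_orth inner_commute)
  have xa: "refl a \<circ> x \<in> W" and xab: "refl b \<circ> (refl a \<circ> x) \<in> W" using refl_comp_W aP bP x by blast+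
  have Xlin: "linear (inv x)" using W_linear[OF W_inv[OF x]] .
  have Xa: "- inv x a \<in> Pos" using descent_iff[OF x a] T by (simp add: descent_triple_def)
  have Xb: "- inv x b \<in> Pos"
    using descent_iff[OF xa b] T inv_refl_comp[OF x aP] rab by (simp add: descent_triple_def)
  define Z where "Z = inv x \<circ> refl a \<circ> refl b"
  have Z': "Z = inv x \<circ> refl b \<circ> refl a" unfolding Z_def by (simp add: fun_eq_iff comm)
  have ZW: "Z \<in> W" unfolding Z_def using W_comp W_inv[OF x] refl_in_W aP bP by metis
  have "inv (refl b \<circ> (refl a \<circ> x)) = Z" unfolding Z_def
    using inv_refl_comp[OF xa bP] inv_refl_comp[OF x aP] by (simp add: comp_assoc)
  then have Zc: "- Z c \<in> Pos" using descent_iff[OF xab c] T by (simp add: descent_triple_def)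
  have Za: "Z a \<in> Pos" using Xa unfolding Z_def by (simp add: rba refl_self[OF an] linear_neg[OF Xlin])
  have Zb: "Z b \<in> Pos" using Xb unfolding Z_def by (simp add: refl_self[OF bn] rab linear_neg[OF Xlin] refl_minus)
  have "exchangeable Z c a \<or> (a \<bullet> c \<noteq> 0 \<and> exchangeable Z c b)"
    using exchangeable_dichotomy[OF ZW a b c ab bc Za Zb Zc] .
  then show ?thesis
  proof
    assume "exchangeable Z c a"
    then show ?thesis using exchange_to_front[OF x a b c ab bc Xa Xb] Zc unfolding Z_def by blast
  next
    assume G: "a \<bullet> c \<noteq> 0 \<and> exchangeable Z c b"
    have "refl c \<circ> (refl a \<circ> (refl b \<circ> x)) = refl c \<circ> (refl b \<circ> (refl a \<circ> x))"
      by (simp add: fun_eq_iff comm)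
    then show ?thesis using exchange_to_front[OF x b a c _ _ Xb Xa] ab G Zc unfolding Z'
      by (metis inner_commute)
  qed
qed

end

section \<open>Reduced descent chains\<close>

definition has_nonorth_pair :: "'a::real_inner list \<Rightarrow> bool" where
  "has_nonorth_pair rs \<longleftrightarrow> (\<exists>i j. i < j \<and> j < length rs \<and> rs ! i \<bullet> rs ! j \<noteq> 0)"

lemma first_nonorth_partner:
  assumes "has_nonorth_pair (r # rest)" and "\<not> has_nonorth_pair rest"
  obtains xs q ys where "rest = xs @ q # ys" "r \<bullet> q \<noteq> 0" "\<forall>y\<in>set xs. y \<bullet> q = 0"
proof -
  have orth: "rest ! i \<bullet> rest ! j = 0" if "i < j" "j < length rest" for i j
    using assms(2) that by (auto simp: has_nonorth_pair_def)
  obtain i j where ij: "i < j" "j < length (r # rest)" "(r # rest) ! i \<bullet> (r # rest) ! j \<noteq> 0"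
    using assms(1) by (auto simp: has_nonorth_pair_def)
  have "i = 0"
    using ij orth[of "i - 1" "j - 1"] by (cases i; cases j) auto
  then obtain k where k: "k < length rest" "r \<bullet> rest ! k \<noteq> 0" using ij by (cases j) auto
  have "rest = take k rest @ rest ! k # drop (Suc k) rest" using k(1) by (simp add: id_take_nth_drop)
  moreover have "\<forall>y\<in>set (take k rest). y \<bullet> rest ! k = 0"
    using orth k(1) by (auto simp: in_set_conv_nth)
  ultimately show ?thesis using that k(2) by blast
qed


context root_base
begin

fun reduced_chain :: "('a \<Rightarrow> 'a) \<Rightarrow> 'a list \<Rightarrow> bool" where
  "reduced_chain u [] = True"
| "reduced_chain u (r # rs) \<longleftrightarrow>
     r \<in> Pos \<and> len (refl r \<circ> u) + 1 = len u \<and> reduced_chain (refl r \<circ> u) rs"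

fun chain_end :: "('a \<Rightarrow> 'a) \<Rightarrow> 'a list \<Rightarrow> ('a \<Rightarrow> 'a)" where
  "chain_end u [] = u"
| "chain_end u (r # rs) = chain_end (refl r \<circ> u) rs"

lemma reduced_chain_append:
  "reduced_chain u (xs @ ys) \<longleftrightarrow> reduced_chain u xs \<and> reduced_chain (chain_end u xs) ys"
  by (induction xs arbitrary: u) auto

lemma chain_end_append: "chain_end u (xs @ ys) = chain_end (chain_end u xs) ys"
  by (induction xs arbitrary: u) auto

lemma chain_swap:
  assumes u: "u \<in> W" and ch: "reduced_chain u (a # b # rs)" and ab: "a \<bullet> b = 0"
  shows "reduced_chain u (b # a # rs) \<and> chain_end u (b # a # rs) = chain_end u (a # b # rs)"
proof -
  have a: "a \<in> Pos" and b: "b \<in> Pos" and l1: "len (refl a \<circ> u) + 1 = len u"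
    and l2: "len (refl b \<circ> (refl a \<circ> u)) + 1 = len (refl a \<circ> u)"
    and rest: "reduced_chain (refl b \<circ> (refl a \<circ> u)) rs" using ch by auto
  have "descent u a" and "descent (refl a \<circ> u) b" using l1 l2 by (auto simp: descent_def)
  note sw = descent_swap[OF u a b ab this]
  then have "len (refl b \<circ> u) + 1 = len u" "len (refl a \<circ> (refl b \<circ> u)) + 1 = len (refl b \<circ> u)"
    using l1 l2 by (auto simp: descent_def)
  then show ?thesis using a b rest sw(3) by simp
qed

lemma chain_move_front:
  assumes "u \<in> W" "reduced_chain u (xs @ [q])" "\<forall>y\<in>set xs. y \<bullet> q = 0"
  shows "reduced_chain u (q # xs) \<and> chain_end u (q # xs) = chain_end u (xs @ [q])"
  using assms
proof (induction xs arbitrary: u)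
  case (Cons y ys)
  have y: "y \<in> Pos" and ch': "reduced_chain (refl y \<circ> u) (ys @ [q])" using Cons.prems by auto
  have uy: "refl y \<circ> u \<in> W" using refl_comp_W Pos_root y Cons.prems(1) by blast
  have "\<forall>y\<in>set ys. y \<bullet> q = 0" using Cons.prems(3) by simp
  then have IH: "reduced_chain (refl y \<circ> u) (q # ys)
      \<and> chain_end (refl y \<circ> u) (q # ys) = chain_end (refl y \<circ> u) (ys @ [q])"
    by (rule Cons.IH[OF uy ch'])
  then have "reduced_chain u (y # q # ys)" using Cons.prems(2) by simp
  from chain_swap[OF Cons.prems(1) this] Cons.prems(3)
  have "reduced_chain u (q # y # ys) \<and> chain_end u (q # y # ys) = chain_end u (y # q # ys)" by simp
  then show ?case using IH by simp
qed simp

lemma chain_move_second: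
  assumes u: "u \<in> W" and ch: "reduced_chain u (r # xs @ q # ys)" and orth: "\<forall>y\<in>set xs. y \<bullet> q = 0"
  shows "reduced_chain u (r # q # xs @ ys) \<and> chain_end u (r # q # xs @ ys) = chain_end u (r # xs @ q # ys)"
proof -
  have r: "r \<in> Pos" and l: "len (refl r \<circ> u) + 1 = len u"
    and ch1: "reduced_chain (refl r \<circ> u) (xs @ [q])"
    and ch2: "reduced_chain (chain_end (refl r \<circ> u) (xs @ [q])) ys"
    using ch reduced_chain_append[of _ "xs @ [q]" ys] by auto
  have ur: "refl r \<circ> u \<in> W" using refl_comp_W Pos_root r u by blast
  note mv = chain_move_front[OF ur ch1 orth]
  then have "reduced_chain (refl r \<circ> u) ((q # xs) @ ys)"
    using ch2 reduced_chain_append by metis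
  moreover have "chain_end (refl r \<circ> u) ((q # xs) @ ys) = chain_end (refl r \<circ> u) ((xs @ [q]) @ ys)"
    using mv chain_end_append by metis
  ultimately show ?thesis using r l by simp
qed

text \<open>The three-step exchange lemma, phrased for reduced chains: since the end is the
  same, the three new descents must each lower the length by exactly one.\<close>
lemma chain_three_step:
  assumes u: "u \<in> W" and ch: "reduced_chain u (a # b # c # rs)" and ab: "a \<bullet> b = 0" and bc: "b \<bullet> c \<noteq> 0"
  shows "\<exists>r1 r2 r3. r1 \<bullet> r2 \<noteq> 0 \<and> reduced_chain u (r1 # r2 # r3 # rs)
           \<and> chain_end u (r1 # r2 # r3 # rs) = chain_end u (a # b # c # rs)"
proof -
  have l: "len (refl a \<circ> u) + 1 = len u" "len (refl b \<circ> (refl a \<circ> u)) + 1 = len (refl a \<circ> u)"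
    "len (refl c \<circ> (refl b \<circ> (refl a \<circ> u))) + 1 = len (refl b \<circ> (refl a \<circ> u))"
    and rest: "reduced_chain (refl c \<circ> (refl b \<circ> (refl a \<circ> u))) rs" using ch by auto
  have "descent_triple u a b c" using ch by (auto simp: descent_triple_def descent_def)
  then obtain r1 r2 r3 where r: "r1 \<bullet> r2 \<noteq> 0" "descent_triple u r1 r2 r3"
    and e: "refl r3 \<circ> (refl r2 \<circ> (refl r1 \<circ> u)) = refl c \<circ> (refl b \<circ> (refl a \<circ> u))"
    using three_step_exchange[OF u ab bc] by blast
  have "len (refl r1 \<circ> u) + 1 = len u" "len (refl r2 \<circ> (refl r1 \<circ> u)) + 1 = len (refl r1 \<circ> u)"
    "len (refl r3 \<circ> (refl r2 \<circ> (refl r1 \<circ> u))) + 1 = len (refl r2 \<circ> (refl r1 \<circ> u))"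
    using r(2) l e by (auto simp: descent_triple_def descent_def)
  then have "reduced_chain u (r1 # r2 # r3 # rs)" using r(2) rest e by (simp add: descent_triple_def)
  then show ?thesis using r(1) e by (intro exI[of _ r1] exI[of _ r2] exI[of _ r3]) simp
qed

text \<open>Induction on the chain: either the tail already has such a pair (then use the
  induction hypothesis and, if necessary, the three-step exchange), or the first root is the
  only one meeting another root non-orthogonally, and that root can be moved forward.\<close>
lemma chain_nonorth_front:
  assumes "u \<in> W" "reduced_chain u rs" "has_nonorth_pair rs"
  shows "\<exists>rs'. length rs' = length rs \<and> reduced_chain u rs' \<and> chain_end u rs' = chain_end u rs
           \<and> rs' ! 0 \<bullet> rs' ! 1 \<noteq> 0"
  using assms
proof (induction rs arbitrary: u)
  case Nil then show ?case by (simp add: has_nonorth_pair_def)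
next
  case (Cons r rest)
  have r: "r \<in> Pos" and l: "len (refl r \<circ> u) + 1 = len u" and chr: "reduced_chain (refl r \<circ> u) rest"
    using Cons.prems by auto
  have ur: "refl r \<circ> u \<in> W" using refl_comp_W Pos_root r Cons.prems(1) by blast
  show ?case
  proof (cases "has_nonorth_pair rest")
    case True
    obtain rest' where R: "length rest' = length rest" "reduced_chain (refl r \<circ> u) rest'"
      "chain_end (refl r \<circ> u) rest' = chain_end (refl r \<circ> u) rest" "rest' ! 0 \<bullet> rest' ! 1 \<noteq> 0"
      using Cons.IH[OF ur chr True] by blast
    have "length rest \<ge> 2" using True by (auto simp: has_nonorth_pair_def)
    then obtain q1 q2 rest'' where rr: "rest' = q1 # q2 # rest''" using R(1)
      by (metis One_nat_def Suc_1 Suc_le_length_iff)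
    have chn: "reduced_chain u (r # q1 # q2 # rest'')" using r l R(2) rr by simp
    show ?thesis
    proof (cases "r \<bullet> q1 = 0")
      case False
      then show ?thesis using chn R rr by (intro exI[of _ "r # rest'"]) simp
    next
      case True
      have "q1 \<bullet> q2 \<noteq> 0" using R(4) rr by simp
      then obtain r1 r2 r3 where "r1 \<bullet> r2 \<noteq> 0" "reduced_chain u (r1 # r2 # r3 # rest'')"
        "chain_end u (r1 # r2 # r3 # rest'') = chain_end u (r # q1 # q2 # rest'')"
        using chain_three_step[OF Cons.prems(1) chn True] by blast
      then show ?thesis using R rr by (intro exI[of _ "r1 # r2 # r3 # rest''"]) simp
    qed
  next
    case False
    then obtain xs q ys where rest: "rest = xs @ q # ys" and rq: "r \<bullet> q \<noteq> 0"
      and orth: "\<forall>y\<in>set xs. y \<bullet> q = 0"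
      using first_nonorth_partner[OF Cons.prems(3)] by blast
    then show ?thesis
      using chain_move_second[OF Cons.prems(1) _ orth] Cons.prems(2)
      by (intro exI[of _ "r # q # xs @ ys"]) auto
  qed
qed

end

lemma map_nth_upt: "map (\<lambda>i. rs ! (i - 1)) [1..<Suc (length rs)] = rs"
  by (rule nth_equalityI) (auto simp: nth_map nth_upt simp del: upt_Suc)

lemma has_nonorth_pair_upt:
  fixes \<beta> :: "nat \<Rightarrow> 'a::real_inner"
  assumes "\<exists>i\<in>{1..m}. \<exists>j\<in>{1..m}. i \<noteq> j \<and> \<beta> i \<bullet> \<beta> j \<noteq> 0"
  shows "has_nonorth_pair (map \<beta> [1..<Suc m])"
proof -
  obtain i j where ij: "i \<in> {1..m}" "j \<in> {1..m}" "i < j" "\<beta> i \<bullet> \<beta> j \<noteq> 0"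
    using assms by (metis inner_commute nat_neq_iff)
  then show ?thesis unfolding has_nonorth_pair_def
    by (intro exI[of _ "i - 1"] exI[of _ "j - 1"]) (auto simp: nth_map nth_upt simp del: upt_Suc)
qed

context root_base
begin

lemma chain_end_upt: "chain_end u (map \<beta> [1..<Suc k]) = refl_prod \<beta> k \<circ> u"
  by (induction k) (simp_all add: chain_end_append comp_assoc)

lemma reduced_chain_upt_iff:
  "reduced_chain w (map \<beta> [1..<Suc m]) \<longleftrightarrow>
     (\<forall>i\<in>{1..m}. \<beta> i \<in> Pos \<and> len (refl_prod \<beta> i \<circ> w) + i = len w)"
proof (induction m)
  case (Suc m)
  have "map \<beta> [1..<Suc (Suc m)] = map \<beta> [1..<Suc m] @ [\<beta> (Suc m)]" by simp
  then have "reduced_chain w (map \<beta> [1..<Suc (Suc m)]) \<longleftrightarrow>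
      reduced_chain w (map \<beta> [1..<Suc m]) \<and>
      \<beta> (Suc m) \<in> Pos \<and> len (refl_prod \<beta> (Suc m) \<circ> w) + 1 = len (refl_prod \<beta> m \<circ> w)"
    by (simp only: reduced_chain_append chain_end_upt) (simp add: comp_assoc)
  also have "\<dots> \<longleftrightarrow> (\<forall>i\<in>{1..m}. \<beta> i \<in> Pos \<and> len (refl_prod \<beta> i \<circ> w) + i = len w) \<and>
      \<beta> (Suc m) \<in> Pos \<and> len (refl_prod \<beta> (Suc m) \<circ> w) + 1 = len (refl_prod \<beta> m \<circ> w)"
    by (simp only: Suc.IH)
  also have "\<dots> \<longleftrightarrow> (\<forall>i\<in>{1..Suc m}. \<beta> i \<in> Pos \<and> len (refl_prod \<beta> i \<circ> w) + i = len w)"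
  proof -
    have "len (refl_prod \<beta> m \<circ> w) + m = len w"
      if "\<forall>i\<in>{1..m}. \<beta> i \<in> Pos \<and> len (refl_prod \<beta> i \<circ> w) + i = len w"
      using that[rule_format, of m] by (cases "m = 0") simp_all
    moreover have "{1..Suc m} = insert (Suc m) {1..m}" by auto
    ultimately show ?thesis by auto
  qed
  finally show ?case .
qed simp

end

theorem mainTheorem20:
  fixes \<Phi> \<Delta> :: "'a::euclidean_space set"
    and w :: "'a \<Rightarrow> 'a" and \<beta> :: "nat \<Rightarrow> 'a" and m :: nat
  assumes "root_system \<Phi>" and "is_base \<Phi> \<Delta>"
    and "w \<in> weyl_group \<Phi>"
    and "\<forall>i\<in>{1..m}. \<beta> i \<in> pos_roots \<Phi> \<Delta>"
    and "\<forall>i\<in>{1..m}. int (weyl_length \<Delta> (refl_prod \<beta> i \<circ> w)) = int (weyl_length \<Delta> w) - int i"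
    and "\<exists>i\<in>{1..m}. \<exists>j\<in>{1..m}. i \<noteq> j \<and> \<beta> i \<bullet> \<beta> j \<noteq> 0"
  shows "\<exists>\<gamma> :: nat \<Rightarrow> 'a.
           (\<forall>i\<in>{1..m}. \<gamma> i \<in> pos_roots \<Phi> \<Delta>)
         \<and> (\<forall>i\<in>{1..m}. int (weyl_length \<Delta> (refl_prod \<gamma> i \<circ> w)) = int (weyl_length \<Delta> w) - int i)
         \<and> refl_prod \<gamma> m \<circ> w = refl_prod \<beta> m \<circ> w
         \<and> \<gamma> 1 \<bullet> \<gamma> 2 \<noteq> 0"
proof -
  interpret root_base \<Phi> \<Delta> using assms(1,2) by unfold_locales
  define rs where "rs = map \<beta> [1..<Suc m]"
  have ch: "reduced_chain w rs" unfolding rs_def reduced_chain_upt_iff using assms(4,5) by fastforce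
  have hp: "has_nonorth_pair rs" unfolding rs_def using has_nonorth_pair_upt[OF assms(6)] .
  have "length rs = m" by (simp add: rs_def)
  then obtain rs' where R: "length rs' = m" "reduced_chain w rs'"
    "chain_end w rs' = chain_end w rs" "rs' ! 0 \<bullet> rs' ! 1 \<noteq> 0"
    using chain_nonorth_front[OF weyl_group_W[OF assms(3)] ch hp] by metis
  define \<gamma> where "\<gamma> = (\<lambda>i. rs' ! (i - 1))"
  have \<gamma>: "map \<gamma> [1..<Suc m] = rs'" unfolding \<gamma>_def using map_nth_upt R(1) by blast
  have "\<forall>i\<in>{1..m}. \<gamma> i \<in> Pos \<and> len (refl_prod \<gamma> i \<circ> w) + i = len w"
    using R(2) unfolding \<gamma>[symmetric] reduced_chain_upt_iff .
  moreover have "refl_prod \<gamma> m \<circ> w = refl_prod \<beta> m \<circ> w"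
    using R(3) chain_end_upt \<gamma> rs_def by metis
  moreover have "\<gamma> 1 \<bullet> \<gamma> 2 \<noteq> 0" using R(4) by (simp add: \<gamma>_def)
  ultimately show ?thesis by (intro exI[of _ \<gamma>]) force
qed

end
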